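(* Let $X\sim\mathbb{P}$ on a sample space $\mathcal{X}$, let $G$ be a compact topological group acting on $\mathcal{X}$ with Haar probability measure $\mathbb{Q}$ (exact invariance $gX=_dX$ is not assumed), let $f:\mathcal{X}\to\mathbb{R}^k$ be such that $(x,g)\mapsto f(gx)$ is in $L^2(\mathbb{P}\times\mathbb{Q})$, let $\bar f(x)=\mathbb{E}_{g\sim\mathbb{Q}}f(gx)$, and let $\|f\|_\infty=\sup_x\|f(x)\|_2$ (possibly $\infty$). Then: 1. $\|\mathbb{E}_X\bar f(X)-\mathbb{E}_Xf(X)\|_2\le\mathbb{E}_g\mathcal{W}_1(f(gX),f(X))$. 2. $\mathrm{Cov}_X\bar f(X)=\mathrm{Cov}_{(X,g)}f(gX)-\mathbb{E}_X\mathrm{Cov}_gf(gX)$, and in the Loewner order $$-\mathbb{E}_X\mathrm{Cov}_gf(gX)-4\|f\|_\infty\mathbb{E}_g\mathcal{W}_1(f(gX),f(X))\,I\preceq\mathrm{Cov}_X\bar f(X)-\mathrm{Cov}_Xf(X)\preceq-\mathbb{E}_X\mathrm{Cov}_gf(gX)+4\|f\|_\infty\mathbb{E}_g\mathcal{W}_1(f(gX),f(X))\,I.$$ 3. For any real-valued convex $\varphi$ on $\mathbb{R}^k$ with (possibly infinite) Lipschitz constant $\|\varphi\|_{\mathrm{Lip}}$, letting $\overline{\varphi\circ f}(x)=\mathbb{E}_g\varphi(f(gx))$, $$\Big|\mathbb{E}_X\varphi(\bar f(X))-\mathbb{E}_X\varphi(f(X))-\big(\mathbb{E}_X\varphi(\bar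 f(X))-\mathbb{E}_X\overline{\varphi\circ f}(X)\big)\Big|\le\|\varphi\|_{\mathrm{Lip}}\,\mathbb{E}_g\mathcal{W}_1(f(gX),f(X)).$$
   Context: For a fixed $g$, $\mathcal{W}_1(f(gX),f(X))$ is the Wasserstein-1 distance between the laws of $f(gX)$ and $f(X)$ for $X\sim\mathbb{P}$: $\mathcal{W}_1(\mu,\nu)=\inf_{\pi\in\Pi(\mu,\nu)}\int\|x-y\|_2\,d\pi(x,y)$, the infimum over couplings with marginals $\mu,\nu$. $\mathbb{E}_g$ and $\mathrm{Cov}_g$ are over $g\sim\mathbb{Q}$; $\mathrm{Cov}_{(X,g)}$ is over $(X,g)\sim\mathbb{P}\times\mathbb{Q}$; $I$ is the identity matrix. Lipschitz constants are with respect to the Euclidean norm. *)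

theory Defs
  imports "HOL-Analysis.Analysis" "HOL-Probability.Probability"
begin

text \<open>Haar probability measure on a compact topological group (group written additively,
  not assumed commutative): a left-invariant Borel probability measure.\<close>
definition haar_prob :: "('g::topological_group_add) measure \<Rightarrow> bool" where
  "haar_prob Q \<longleftrightarrow> prob_space Q \<and> sets Q = sets borel \<and>
     (\<forall>g A. A \<in> sets borel \<longrightarrow> emeasure Q ((\<lambda>h. g + h) ` A) = emeasure Q A)"

definition couplings :: "('a::metric_space) measure \<Rightarrow> 'a measure \<Rightarrow> ('a \<times> 'a) measure set" where
  "couplings \<mu> \<nu> = {\<pi>. sets \<pi> = sets (borel \<Otimes>\<^sub>M borel) \<and>
      distr \<pi> borel fst = \<mu> \<and> distr \<pi> borel snd = \<nu>}"

definition wasserstein1 :: "('a::metric_space) measure \<Rightarrow> 'a measure \<Rightarrow> ennreal" where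
  "wasserstein1 \<mu> \<nu> = (INF \<pi> \<in> couplings \<mu> \<nu>. \<integral>\<^sup>+ z. ennreal (dist (fst z) (snd z)) \<partial>\<pi>)"

definition cov_mat :: "'a measure \<Rightarrow> ('a \<Rightarrow> real^'k) \<Rightarrow> real^'k^'k" where
  "cov_mat M Y = (\<chi> i j. \<integral>\<omega>. (Y \<omega> $ i - (\<integral>\<omega>'. Y \<omega>' $ i \<partial>M)) *
                              (Y \<omega> $ j - (\<integral>\<omega>'. Y \<omega>' $ j \<partial>M)) \<partial>M)"

definition loewner_le :: "real^'k^'k \<Rightarrow> real^'k^'k \<Rightarrow> bool" where
  "loewner_le A B \<longleftrightarrow> (\<forall>v. v \<bullet> ((B - A) *v v) \<ge> 0)"

definition orbit_avg :: "'g measure \<Rightarrow> ('g \<Rightarrow> 'x \<Rightarrow> 'x) \<Rightarrow> ('x \<Rightarrow> 'b::{banach,second_countable_topology}) \<Rightarrow> 'x \<Rightarrow> 'b" where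
  "orbit_avg Q act f x = (\<integral>g. f (act g x) \<partial>Q)"

definition sup_norm :: "('x \<Rightarrow> 'b::real_normed_vector) \<Rightarrow> ennreal" where
  "sup_norm f = (SUP x. ennreal (norm (f x)))"

definition lip_const :: "('a::metric_space \<Rightarrow> 'b::metric_space) \<Rightarrow> ennreal" where
  "lip_const \<phi> = (SUP (x, y) \<in> {(x, y). x \<noteq> y}. ennreal (dist (\<phi> x) (\<phi> y) / dist x y))"

end

theory Submission
  imports Defs
begin

(* For a 1-Lipschitz h and a fixed g, the easy direction of Kantorovich duality gives
   |E h(f(gX)) - E h(f(X))| <= W1(f(gX), f(X)); integrating over g (Fubini) bounds the shift
   E_(X,g) h(f(gX)) - E_X h(f(X)) by E_g W1. Part 1 is the case h = id, and in part 3 the left-hand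
   side collapses to the shift for h = phi.
   Part 2 is the law of total covariance for the pair (X, g). The Loewner bound compares the
   variances of v . f: the means shift by at most |v| E_g W1, and the second moments by at most
   2 |f|_inf |v|^2 E_g W1, using the Lipschitz function y |-> min(|v . y|, |f|_inf |v|)^2.
   If |f|_inf is infinite the hypothesis forces E_g W1 = 0; then the truncated second moments agree
   at every level, and monotone convergence shows that f(X) is square integrable with the same
   second moments as f(gX). *)

section \<open>Lipschitz test functions and the Wasserstein distance\<close>

lemma lipschitz_on_borel_measurable:
  fixes h :: "'a::{metric_space,second_countable_topology}
    \<Rightarrow> 'b::{metric_space,second_countable_topology}"
  assumes "L-lipschitz_on UNIV h"
  shows "h \<in> borel_measurable borel"
  using lipschitz_on_continuous_on[OF assms] by (rule borel_measurable_continuous_onI)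

lemma lipschitz_on_lip_const:
  assumes "lip_const \<phi> \<noteq> \<infinity>"
  shows "lipschitz_on (enn2real (lip_const \<phi>)) UNIV \<phi>"
proof (rule lipschitz_onI)
  fix a b
  show "dist (\<phi> a) (\<phi> b) \<le> enn2real (lip_const \<phi>) * dist a b"
  proof (cases "a = b")
    case False
    then have "ennreal (dist (\<phi> a) (\<phi> b) / dist a b) \<le> lip_const \<phi>"
      unfolding lip_const_def by (intro SUP_upper2[of "(a, b)"]) auto
    then have "enn2real (ennreal (dist (\<phi> a) (\<phi> b) / dist a b)) \<le> enn2real (lip_const \<phi>)"
      using assms by (intro enn2real_mono) (auto simp: top.not_eq_extremum)
    with False show ?thesis by (simp add: divide_le_eq)
  qed simp
qed simp

lemma lipschitz_on_inner: "(norm v)-lipschitz_on U (\<lambda>y. v \<bullet> y)"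
proof (rule lipschitz_onI)
  fix x y :: 'a
  show "dist (v \<bullet> x) (v \<bullet> y) \<le> norm v * dist x y"
    using Cauchy_Schwarz_ineq2[of v "x - y"] by (simp add: dist_real_def dist_norm inner_diff_right)
qed simp

lemma integrable_lipschitz_comp:
  fixes h :: "'b::{banach,second_countable_topology} \<Rightarrow> 'c::{banach,second_countable_topology}"
  assumes "finite_measure M" "L-lipschitz_on UNIV h" "integrable M X"
  shows "integrable M (\<lambda>\<omega>. h (X \<omega>))"
proof (rule Bochner_Integration.integrable_bound)
  show "integrable M (\<lambda>\<omega>. norm (h 0) + L * norm (X \<omega>))"
    using assms(1,3)
    by (intro Bochner_Integration.integrable_add finite_measure.integrable_const) auto
  show "(\<lambda>\<omega>. h (X \<omega>)) \<in> borel_measurable M"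
    using lipschitz_on_borel_measurable[OF assms(2)] borel_measurable_integrable[OF assms(3)]
    by measurable
  have "norm (h y) \<le> norm (h 0) + L * norm y" for y
    using lipschitz_on_normD[OF assms(2), of y 0] norm_triangle_ineq2[of "h y" "h 0"] by simp
  then show "AE \<omega> in M. norm (h (X \<omega>)) \<le> norm (norm (h 0) + L * norm (X \<omega>))"
    using lipschitz_on_nonneg[OF assms(2)]
    by (intro AE_I2) (simp add: order_trans[OF _ abs_ge_self])
qed

lemma integral_dist_le_transport_cost:
  fixes h :: "'a::{metric_space,second_countable_topology} \<Rightarrow> 'b::{banach,second_countable_topology}"
  assumes \<pi>: "\<pi> \<in> couplings \<mu> \<nu>" and h: "1-lipschitz_on UNIV h"
    and cost: "integrable \<pi> (\<lambda>z. dist (fst z) (snd z))"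
  shows "dist (\<integral>x. h x \<partial>\<mu>) (\<integral>x. h x \<partial>\<nu>) \<le> (\<integral>z. dist (fst z) (snd z) \<partial>\<pi>)"
proof -
  have sets_\<pi>: "sets \<pi> = sets (borel \<Otimes>\<^sub>M borel)" and \<mu>: "distr \<pi> borel fst = \<mu>"
    and \<nu>: "distr \<pi> borel snd = \<nu>"
    using \<pi> unfolding couplings_def by auto
  have [measurable]: "h \<in> borel_measurable borel"
    by (rule lipschitz_on_borel_measurable[OF h])
  have [measurable]: "fst \<in> measurable \<pi> borel" "snd \<in> measurable \<pi> borel"
    by (simp_all add: measurable_cong_sets[OF sets_\<pi> refl])
  have int_\<mu>: "(\<integral>x. h x \<partial>\<mu>) = (\<integral>z. h (fst z) \<partial>\<pi>)"
    unfolding \<mu>[symmetric] by (rule integral_distr) measurable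
  have int_\<nu>: "(\<integral>x. h x \<partial>\<nu>) = (\<integral>z. h (snd z) \<partial>\<pi>)"
    unfolding \<nu>[symmetric] by (rule integral_distr) measurable
  have increment: "norm (h (fst z) - h (snd z)) \<le> dist (fst z) (snd z)" for z
    using lipschitz_onD[OF h] by (simp add: dist_norm)
  have int_increment: "integrable \<pi> (\<lambda>z. h (fst z) - h (snd z))"
    by (rule Bochner_Integration.integrable_bound[OF cost]) (use increment in auto)
  show ?thesis
  proof (cases "integrable \<pi> (\<lambda>z. h (fst z))")
    case True
    moreover have "integrable \<pi> (\<lambda>z. h (snd z))"
      using Bochner_Integration.integrable_diff[OF True int_increment] by simp
    ultimately have "dist (\<integral>x. h x \<partial>\<mu>) (\<integral>x. h x \<partial>\<nu>) = norm (\<integral>z. h (fst z) - h (snd z) \<partial>\<pi>)"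
      by (simp add: int_\<mu> int_\<nu> dist_norm)
    also have "\<dots> \<le> (\<integral>z. norm (h (fst z) - h (snd z)) \<partial>\<pi>)"
      by (rule integral_norm_bound)
    also have "\<dots> \<le> (\<integral>z. dist (fst z) (snd z) \<partial>\<pi>)"
      using int_increment cost increment by (intro integral_mono) auto
    finally show ?thesis .
  next
    case False
    have "\<not> integrable \<pi> (\<lambda>z. h (snd z))"
    proof
      assume "integrable \<pi> (\<lambda>z. h (snd z))"
      from Bochner_Integration.integrable_add[OF this int_increment] False show False by simp
    qed
    with False have "(\<integral>x. h x \<partial>\<mu>) = 0" "(\<integral>x. h x \<partial>\<nu>) = 0"
      unfolding int_\<mu> int_\<nu> by (simp_all add: not_integrable_integral_eq)
    moreover have "0 \<le> (\<integral>z. dist (fst z) (snd z) \<partial>\<pi>)"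
      by (rule integral_nonneg_AE) simp
    ultimately show ?thesis by simp
  qed
qed

lemma integral_dist_le_wasserstein1:
  fixes h :: "'a::{metric_space,second_countable_topology} \<Rightarrow> 'b::{banach,second_countable_topology}"
  assumes h: "1-lipschitz_on UNIV h"
  shows "ennreal (dist (\<integral>x. h x \<partial>\<mu>) (\<integral>x. h x \<partial>\<nu>)) \<le> wasserstein1 \<mu> \<nu>"
  unfolding wasserstein1_def
proof (rule INF_greatest)
  fix \<pi> assume \<pi>: "\<pi> \<in> couplings \<mu> \<nu>"
  then have "sets \<pi> = sets (borel \<Otimes>\<^sub>M borel)"
    unfolding couplings_def by simp
  then have [measurable]: "(\<lambda>z. dist (fst z) (snd z)) \<in> borel_measurable \<pi>"
    by (subst measurable_cong_sets[OF _ refl]) measurable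
  show "ennreal (dist (\<integral>x. h x \<partial>\<mu>) (\<integral>x. h x \<partial>\<nu>)) \<le> (\<integral>\<^sup>+ z. ennreal (dist (fst z) (snd z)) \<partial>\<pi>)"
  proof (cases "integrable \<pi> (\<lambda>z. dist (fst z) (snd z))")
    case True
    then show ?thesis
      using integral_dist_le_transport_cost[OF \<pi> h True]
      by (simp add: nn_integral_eq_integral ennreal_leI)
  next
    case False
    then have "(\<integral>\<^sup>+ z. ennreal (dist (fst z) (snd z)) \<partial>\<pi>) = \<infinity>"
      by (auto intro: integrableI_nonneg simp: top.not_eq_extremum)
    then show ?thesis by simp
  qed
qed

(* No measurability of W is assumed: W1(f(gX), f(X)) is not known to be measurable in g. *)
lemma norm_integral_le_nn_integral:
  fixes s :: "'a \<Rightarrow> 'b::{banach,second_countable_topology}"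
  assumes "integrable M s" "\<And>\<omega>. \<omega> \<in> space M \<Longrightarrow> ennreal (norm (s \<omega>)) \<le> W \<omega>"
  shows "ennreal (norm (\<integral>\<omega>. s \<omega> \<partial>M)) \<le> (\<integral>\<^sup>+\<omega>. W \<omega> \<partial>M)"
proof -
  have "ennreal (norm (\<integral>\<omega>. s \<omega> \<partial>M)) \<le> ennreal (\<integral>\<omega>. norm (s \<omega>) \<partial>M)"
    by (intro ennreal_leI integral_norm_bound)
  also have "\<dots> = (\<integral>\<^sup>+\<omega>. ennreal (norm (s \<omega>)) \<partial>M)"
    using assms(1) by (simp add: nn_integral_eq_integral)
  also have "\<dots> \<le> (\<integral>\<^sup>+\<omega>. W \<omega> \<partial>M)"
    using assms(2) by (rule nn_integral_mono)
  finally show ?thesis .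
qed

lemma norm_le_sup_norm:
  assumes "sup_norm f \<noteq> \<infinity>"
  shows "norm (f x) \<le> enn2real (sup_norm f)"
proof -
  have "ennreal (norm (f x)) \<le> sup_norm f"
    unfolding sup_norm_def by (rule SUP_upper) simp
  then have "enn2real (ennreal (norm (f x))) \<le> enn2real (sup_norm f)"
    using assms by (intro enn2real_mono) (auto simp: top.not_eq_extremum)
  then show ?thesis by simp
qed

section \<open>Vector-valued integrals and covariances\<close>

lemma borel_measurable_vec_nth [measurable (raw)]:
  fixes Y :: "'a \<Rightarrow> real^'n"
  shows "Y \<in> borel_measurable M \<Longrightarrow> (\<lambda>\<omega>. Y \<omega> $ i) \<in> borel_measurable M"
  by (rule measurable_compose[OF _ borel_measurable_nth])

lemma bounded_linear_axis: "bounded_linear (axis i :: 'b::euclidean_space \<Rightarrow> 'b^'n)"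
  by (simp add: linear_conv_bounded_linear[symmetric] linear_iff vec_eq_iff axis_def)

lemma integrable_vec_iff:
  fixes \<Phi> :: "'a \<Rightarrow> 'b::euclidean_space^'n"
  shows "integrable M \<Phi> \<longleftrightarrow> (\<forall>i. integrable M (\<lambda>\<omega>. \<Phi> \<omega> $ i))"
proof
  assume "\<forall>i. integrable M (\<lambda>\<omega>. \<Phi> \<omega> $ i)"
  then have "integrable M (\<lambda>\<omega>. \<Sum>i\<in>UNIV. axis i (\<Phi> \<omega> $ i))"
    by (intro Bochner_Integration.integrable_sum integrable_bounded_linear[OF bounded_linear_axis])
      auto
  moreover have "(\<Sum>i\<in>UNIV. axis i (v $ i)) = v" for v :: "'b^'n"
    by (simp add: vec_eq_iff axis_def if_distrib)
  ultimately show "integrable M \<Phi>" by simp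
qed (auto intro: integrable_bounded_linear[OF bounded_linear_vec_nth])

lemma integral_vec_nth:
  fixes \<Phi> :: "'a \<Rightarrow> 'b::euclidean_space^'n"
  assumes "integrable M \<Phi>"
  shows "(\<integral>\<omega>. \<Phi> \<omega> \<partial>M) $ i = (\<integral>\<omega>. \<Phi> \<omega> $ i \<partial>M)"
  using integral_bounded_linear[OF bounded_linear_vec_nth assms, of i] by simp

lemma abs_mult_le_sum_squares: "\<bar>x * z\<bar> \<le> x\<^sup>2 + z\<^sup>2" for x z :: real
proof -
  have "2 * (\<bar>x\<bar> * \<bar>z\<bar>) \<le> x\<^sup>2 + z\<^sup>2"
    using sum_squares_bound[of "\<bar>x\<bar>" "\<bar>z\<bar>"] by (simp add: mult.assoc)
  moreover have "0 \<le> \<bar>x\<bar> * \<bar>z\<bar>" by simp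
  ultimately show ?thesis unfolding abs_mult by linarith
qed

lemma integrable_mult_of_squares:
  fixes X Z :: "'a \<Rightarrow> real"
  assumes [measurable]: "X \<in> borel_measurable M" "Z \<in> borel_measurable M"
    and "integrable M (\<lambda>\<omega>. (X \<omega>)\<^sup>2)" "integrable M (\<lambda>\<omega>. (Z \<omega>)\<^sup>2)"
  shows "integrable M (\<lambda>\<omega>. X \<omega> * Z \<omega>)"
proof (rule Bochner_Integration.integrable_bound)
  show "integrable M (\<lambda>\<omega>. (X \<omega>)\<^sup>2 + (Z \<omega>)\<^sup>2)"
    using assms(3,4) by simp
  show "AE \<omega> in M. norm (X \<omega> * Z \<omega>) \<le> norm ((X \<omega>)\<^sup>2 + (Z \<omega>)\<^sup>2)"
    by (intro AE_I2) (simp add: abs_mult_le_sum_squares)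
qed measurable

lemma square_integrable_vec_nth:
  fixes Y :: "'a \<Rightarrow> real^'k"
  assumes [measurable]: "Y \<in> borel_measurable M"
    and "integrable M (\<lambda>\<omega>. (norm (Y \<omega>))\<^sup>2)"
  shows "integrable M (\<lambda>\<omega>. (Y \<omega> $ i)\<^sup>2)"
proof (rule Bochner_Integration.integrable_bound[OF assms(2)])
  have "\<bar>y $ i\<bar>\<^sup>2 \<le> (norm y)\<^sup>2" for y :: "real^'k"
    by (intro power_mono component_le_norm_cart) simp
  then show "AE \<omega> in M. norm ((Y \<omega> $ i)\<^sup>2) \<le> norm ((norm (Y \<omega>))\<^sup>2)"
    by (intro AE_I2) simp
qed measurable

lemma (in prob_space) square_expectation_le:
  fixes X :: "'a \<Rightarrow> real"
  assumes "integrable M X" "integrable M (\<lambda>\<omega>. (X \<omega>)\<^sup>2)"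
  shows "(expectation X)\<^sup>2 \<le> expectation (\<lambda>\<omega>. (X \<omega>)\<^sup>2)"
  using variance_positive[of X] variance_eq[OF assms] by simp

lemma (in prob_space) abs_expectation_le:
  fixes X :: "'a \<Rightarrow> real"
  assumes "X \<in> borel_measurable M" "\<And>\<omega>. \<omega> \<in> space M \<Longrightarrow> \<bar>X \<omega>\<bar> \<le> R"
  shows "\<bar>expectation X\<bar> \<le> R"
proof -
  have "integrable M X"
    by (rule integrable_const_bound[where B=R]) (use assms in auto)
  then have "expectation (\<lambda>\<omega>. \<bar>X \<omega>\<bar>) \<le> R"
    by (intro integral_le_const) (use assms in auto)
  then show ?thesis
    using integral_abs_bound[of M X] by linarith
qed

definition covariance :: "'a measure \<Rightarrow> ('a \<Rightarrow> real) \<Rightarrow> ('a \<Rightarrow> real) \<Rightarrow> real" where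
  "covariance M X Z = (\<integral>\<omega>. (X \<omega> - (\<integral>\<omega>'. X \<omega>' \<partial>M)) * (Z \<omega> - (\<integral>\<omega>'. Z \<omega>' \<partial>M)) \<partial>M)"

lemma cov_mat_nth: "cov_mat M Y $ i $ j = covariance M (\<lambda>\<omega>. Y \<omega> $ i) (\<lambda>\<omega>. Y \<omega> $ j)"
  by (simp add: cov_mat_def covariance_def)

lemma covariance_cong_AE:
  assumes [measurable]: "X \<in> borel_measurable M" "X' \<in> borel_measurable M"
    "Z \<in> borel_measurable M" "Z' \<in> borel_measurable M"
    and "AE \<omega> in M. X \<omega> = X' \<omega>" "AE \<omega> in M. Z \<omega> = Z' \<omega>"
  shows "covariance M X Z = covariance M X' Z'"
proof -
  have "(\<integral>\<omega>. X \<omega> \<partial>M) = (\<integral>\<omega>. X' \<omega> \<partial>M)" "(\<integral>\<omega>. Z \<omega> \<partial>M) = (\<integral>\<omega>. Z' \<omega> \<partial>M)"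
    using assms(5,6) by (auto intro: integral_cong_AE)
  then show ?thesis
    unfolding covariance_def using assms(5,6) by (intro integral_cong_AE) auto
qed

lemma (in prob_space) covariance_eq:
  assumes "integrable M X" "integrable M Z" "integrable M (\<lambda>\<omega>. X \<omega> * Z \<omega>)"
  shows "covariance M X Z = expectation (\<lambda>\<omega>. X \<omega> * Z \<omega>) - expectation X * expectation Z"
  using assms by (simp add: covariance_def algebra_simps prob_space)

lemma (in prob_space) covariance_self_eq:
  fixes X :: "'a \<Rightarrow> real"
  assumes "integrable M X" "integrable M (\<lambda>\<omega>. (X \<omega>)\<^sup>2)"
  shows "covariance M X X = expectation (\<lambda>\<omega>. (X \<omega>)\<^sup>2) - (expectation X)\<^sup>2"
  using variance_eq[OF assms] by (simp add: covariance_def power2_eq_square)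

lemma abs_diff_variances_le:
  fixes a b s t R :: real
  assumes "\<bar>a\<bar> \<le> R" "\<bar>b\<bar> \<le> R"
  shows "\<bar>(s - a\<^sup>2) - (t - b\<^sup>2)\<bar> \<le> \<bar>s - t\<bar> + 2 * R * \<bar>a - b\<bar>"
proof -
  have "(s - a\<^sup>2) - (t - b\<^sup>2) = (s - t) - (a - b) * (a + b)"
    by (simp add: power2_eq_square algebra_simps)
  moreover have "\<bar>(a - b) * (a + b)\<bar> \<le> 2 * R * \<bar>a - b\<bar>"
    using assms by (simp add: abs_mult mult.commute mult_left_mono)
  ultimately show ?thesis by linarith
qed

lemma (in prob_space) inner_cov_mat:
  fixes Y :: "'a \<Rightarrow> real^'k"
  assumes [measurable]: "Y \<in> borel_measurable M"
    and square_integrable: "\<And>i. integrable M (\<lambda>\<omega>. (Y \<omega> $ i)\<^sup>2)"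
  shows "v \<bullet> (cov_mat M Y *v v) = covariance M (\<lambda>\<omega>. v \<bullet> Y \<omega>) (\<lambda>\<omega>. v \<bullet> Y \<omega>)"
proof -
  have int_Y: "integrable M (\<lambda>\<omega>. Y \<omega> $ i)" for i
    by (rule square_integrable_imp_integrable[OF _ square_integrable]) measurable
  have int_YY: "integrable M (\<lambda>\<omega>. Y \<omega> $ i * Y \<omega> $ j)" for i j
    by (rule integrable_mult_of_squares[OF _ _ square_integrable square_integrable]) measurable
  have int_vY: "integrable M (\<lambda>\<omega>. v \<bullet> Y \<omega>)"
    unfolding inner_vec_def using int_Y by simp
  have square: "(v \<bullet> y)\<^sup>2 = (\<Sum>i\<in>UNIV. \<Sum>j\<in>UNIV. v $ i * v $ j * (y $ i * y $ j))" for y :: "real^'k"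
    unfolding inner_vec_def power2_eq_square sum_product by (simp add: algebra_simps)
  have int_vY2: "integrable M (\<lambda>\<omega>. (v \<bullet> Y \<omega>)\<^sup>2)"
    unfolding square using int_YY by simp
  have mean: "expectation (\<lambda>\<omega>. v \<bullet> Y \<omega>) = (\<Sum>i\<in>UNIV. v $ i * expectation (\<lambda>\<omega>. Y \<omega> $ i))"
    unfolding inner_vec_def using int_Y by simp
  have second_moment: "expectation (\<lambda>\<omega>. (v \<bullet> Y \<omega>)\<^sup>2)
      = (\<Sum>i\<in>UNIV. \<Sum>j\<in>UNIV. v $ i * v $ j * expectation (\<lambda>\<omega>. Y \<omega> $ i * Y \<omega> $ j))"
    unfolding square using int_YY by simp
  have "v \<bullet> (cov_mat M Y *v v) = (\<Sum>i\<in>UNIV. \<Sum>j\<in>UNIV. v $ i * v $ j * cov_mat M Y $ i $ j)"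
    unfolding inner_vec_def matrix_vector_mult_def by (simp add: sum_distrib_left algebra_simps)
  also have "\<dots> = (\<Sum>i\<in>UNIV. \<Sum>j\<in>UNIV. v $ i * v $ j * expectation (\<lambda>\<omega>. Y \<omega> $ i * Y \<omega> $ j))
      - (\<Sum>i\<in>UNIV. \<Sum>j\<in>UNIV. (v $ i * expectation (\<lambda>\<omega>. Y \<omega> $ i)) * (v $ j * expectation (\<lambda>\<omega>. Y \<omega> $ j)))"
    using int_Y int_YY by (simp add: cov_mat_nth covariance_eq algebra_simps sum_subtractf)
  also have "\<dots> = expectation (\<lambda>\<omega>. (v \<bullet> Y \<omega>)\<^sup>2) - (expectation (\<lambda>\<omega>. v \<bullet> Y \<omega>))\<^sup>2"
    unfolding second_moment mean by (simp add: power2_eq_square sum_product)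
  also have "\<dots> = covariance M (\<lambda>\<omega>. v \<bullet> Y \<omega>) (\<lambda>\<omega>. v \<bullet> Y \<omega>)"
    using int_vY int_vY2 by (simp add: covariance_eq power2_eq_square)
  finally show ?thesis .
qed

lemma (in pair_prob_space) law_of_total_covariance:
  fixes X Z :: "'a \<times> 'b \<Rightarrow> real"
  assumes [measurable]: "X \<in> borel_measurable (M1 \<Otimes>\<^sub>M M2)" "Z \<in> borel_measurable (M1 \<Otimes>\<^sub>M M2)"
    and square_integrable:
      "integrable (M1 \<Otimes>\<^sub>M M2) (\<lambda>z. (X z)\<^sup>2)" "integrable (M1 \<Otimes>\<^sub>M M2) (\<lambda>z. (Z z)\<^sup>2)"
  shows "has_bochner_integral M1 (\<lambda>x. covariance M2 (\<lambda>y. X (x, y)) (\<lambda>y. Z (x, y)))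
     (covariance (M1 \<Otimes>\<^sub>M M2) X Z - covariance M1 (\<lambda>x. \<integral>y. X (x, y) \<partial>M2) (\<lambda>x. \<integral>y. Z (x, y) \<partial>M2))"
proof -
  define X' where "X' x = (\<integral>y. X (x, y) \<partial>M2)" for x
  define Z' where "Z' x = (\<integral>y. Z (x, y) \<partial>M2)" for x
  have int_X: "integrable (M1 \<Otimes>\<^sub>M M2) X" and int_Z: "integrable (M1 \<Otimes>\<^sub>M M2) Z"
    using square_integrable by (auto intro: P.square_integrable_imp_integrable)
  have int_XZ: "integrable (M1 \<Otimes>\<^sub>M M2) (\<lambda>z. X z * Z z)"
    by (rule integrable_mult_of_squares[OF _ _ square_integrable]) measurable
  have [measurable]: "X' \<in> borel_measurable M1" "Z' \<in> borel_measurable M1"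
    unfolding X'_def Z'_def by (auto intro!: M2.borel_measurable_lebesgue_integral)
  have [measurable]: "(\<lambda>x. covariance M2 (\<lambda>y. X (x, y)) (\<lambda>y. Z (x, y))) \<in> borel_measurable M1"
    unfolding covariance_def by measurable
  have fibres: "AE x in M1. integrable M2 (\<lambda>y. X (x, y)) \<and> integrable M2 (\<lambda>y. Z (x, y))
      \<and> integrable M2 (\<lambda>y. X (x, y) * Z (x, y))
      \<and> integrable M2 (\<lambda>y. (X (x, y))\<^sup>2) \<and> integrable M2 (\<lambda>y. (Z (x, y))\<^sup>2)"
    using AE_integrable_fst'[OF int_X] AE_integrable_fst'[OF int_Z] AE_integrable_fst'[OF int_XZ]
      AE_integrable_fst'[OF square_integrable(1)] AE_integrable_fst'[OF square_integrable(2)]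
    by eventually_elim simp
  have fibre_cov: "AE x in M1. covariance M2 (\<lambda>y. X (x, y)) (\<lambda>y. Z (x, y))
      = (\<integral>y. X (x, y) * Z (x, y) \<partial>M2) - X' x * Z' x"
    using fibres by eventually_elim (simp add: M2.covariance_eq X'_def Z'_def)
  have int_X'Z': "integrable M1 (\<lambda>x. X' x * Z' x)"
  proof (rule Bochner_Integration.integrable_bound)
    show "integrable M1 (\<lambda>x. (\<integral>y. (X (x, y))\<^sup>2 \<partial>M2) + (\<integral>y. (Z (x, y))\<^sup>2 \<partial>M2))"
      using integrable_fst'[OF square_integrable(1)] integrable_fst'[OF square_integrable(2)]
      by simp
    show "AE x in M1. norm (X' x * Z' x)
        \<le> norm ((\<integral>y. (X (x, y))\<^sup>2 \<partial>M2) + (\<integral>y. (Z (x, y))\<^sup>2 \<partial>M2))"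
      using fibres
    proof eventually_elim
      case (elim x)
      then have "(X' x)\<^sup>2 \<le> (\<integral>y. (X (x, y))\<^sup>2 \<partial>M2)" "(Z' x)\<^sup>2 \<le> (\<integral>y. (Z (x, y))\<^sup>2 \<partial>M2)"
        unfolding X'_def Z'_def by (auto intro: M2.square_expectation_le)
      with abs_mult_le_sum_squares[of "X' x" "Z' x"] show ?case by simp
    qed
  qed measurable
  have "(\<integral>x. covariance M2 (\<lambda>y. X (x, y)) (\<lambda>y. Z (x, y)) \<partial>M1)
      = (\<integral>x. (\<integral>y. X (x, y) * Z (x, y) \<partial>M2) - X' x * Z' x \<partial>M1)"
    using fibre_cov by (intro integral_cong_AE) (auto intro!: M2.borel_measurable_lebesgue_integral)
  also have "\<dots> = (\<integral>z. X z * Z z \<partial>(M1 \<Otimes>\<^sub>M M2)) - (\<integral>x. X' x * Z' x \<partial>M1)"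
    using integrable_fst'[OF int_XZ] int_X'Z' by (simp add: integral_fst'[OF int_XZ])
  also have "\<dots> = covariance (M1 \<Otimes>\<^sub>M M2) X Z - covariance M1 X' Z'"
  proof -
    have "integrable M1 X'" "integrable M1 Z'"
      unfolding X'_def Z'_def by (intro integrable_fst' int_X int_Z)+
    moreover have "(\<integral>x. X' x \<partial>M1) = (\<integral>z. X z \<partial>(M1 \<Otimes>\<^sub>M M2))"
      and "(\<integral>x. Z' x \<partial>M1) = (\<integral>z. Z z \<partial>(M1 \<Otimes>\<^sub>M M2))"
      unfolding X'_def Z'_def by (intro integral_fst' int_X int_Z)+
    ultimately show ?thesis
      using int_X int_Z int_XZ int_X'Z' by (simp add: P.covariance_eq M1.covariance_eq)
  qed
  finally have "(\<integral>x. covariance M2 (\<lambda>y. X (x, y)) (\<lambda>y. Z (x, y)) \<partial>M1)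
      = covariance (M1 \<Otimes>\<^sub>M M2) X Z - covariance M1 X' Z'" .
  moreover have "integrable M1 (\<lambda>x. covariance M2 (\<lambda>y. X (x, y)) (\<lambda>y. Z (x, y)))"
  proof (rule integrable_cong_AE_imp)
    show "integrable M1 (\<lambda>x. (\<integral>y. X (x, y) * Z (x, y) \<partial>M2) - X' x * Z' x)"
      using integrable_fst'[OF int_XZ] int_X'Z' by simp
  qed (use fibre_cov in \<open>auto elim: AE_mp\<close>)
  ultimately show ?thesis
    unfolding X'_def Z'_def by (simp add: has_bochner_integral_iff)
qed

lemma (in pair_prob_space) law_of_total_cov_mat:
  fixes Y :: "'a \<times> 'b \<Rightarrow> real^'k"
  assumes [measurable]: "Y \<in> borel_measurable (M1 \<Otimes>\<^sub>M M2)"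
    and square_integrable: "integrable (M1 \<Otimes>\<^sub>M M2) (\<lambda>z. (norm (Y z))\<^sup>2)"
  shows "cov_mat M1 (\<lambda>x. \<integral>y. Y (x, y) \<partial>M2)
    = cov_mat (M1 \<Otimes>\<^sub>M M2) Y - (\<integral>x. cov_mat M2 (\<lambda>y. Y (x, y)) \<partial>M1)"
proof -
  note square_integrable_nth = square_integrable_vec_nth[OF assms]
  have total: "has_bochner_integral M1 (\<lambda>x. covariance M2 (\<lambda>y. Y (x, y) $ i) (\<lambda>y. Y (x, y) $ j))
      (covariance (M1 \<Otimes>\<^sub>M M2) (\<lambda>z. Y z $ i) (\<lambda>z. Y z $ j)
        - covariance M1 (\<lambda>x. \<integral>y. Y (x, y) $ i \<partial>M2) (\<lambda>x. \<integral>y. Y (x, y) $ j \<partial>M2))" for i j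
    by (rule law_of_total_covariance[OF _ _ square_integrable_nth square_integrable_nth]) measurable
  have "integrable (M1 \<Otimes>\<^sub>M M2) Y"
    unfolding integrable_vec_iff
    by (auto intro: P.square_integrable_imp_integrable[OF _ square_integrable_nth])
  from AE_integrable_fst'[OF this]
  have mean_nth: "AE x in M1. \<forall>i. (\<integral>y. Y (x, y) \<partial>M2) $ i = (\<integral>y. Y (x, y) $ i \<partial>M2)"
    by eventually_elim (simp add: integral_vec_nth)
  have [measurable]: "(\<lambda>x. \<integral>y. Y (x, y) \<partial>M2) \<in> borel_measurable M1"
    by (rule M2.borel_measurable_lebesgue_integral) simp
  have int_cov_nth: "integrable M1 (\<lambda>x. cov_mat M2 (\<lambda>y. Y (x, y)) $ i)" for i
    unfolding integrable_vec_iff cov_mat_nth using total by (auto simp: has_bochner_integral_iff)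
  have "cov_mat M1 (\<lambda>x. \<integral>y. Y (x, y) \<partial>M2) $ i $ j
    = (cov_mat (M1 \<Otimes>\<^sub>M M2) Y - (\<integral>x. cov_mat M2 (\<lambda>y. Y (x, y)) \<partial>M1)) $ i $ j" for i j
  proof -
    have "cov_mat M1 (\<lambda>x. \<integral>y. Y (x, y) \<partial>M2) $ i $ j
        = covariance M1 (\<lambda>x. \<integral>y. Y (x, y) $ i \<partial>M2) (\<lambda>x. \<integral>y. Y (x, y) $ j \<partial>M2)"
      unfolding cov_mat_nth
      by (rule covariance_cong_AE)
        (use mean_nth in \<open>auto intro!: M2.borel_measurable_lebesgue_integral\<close>)
    also have "\<dots> = covariance (M1 \<Otimes>\<^sub>M M2) (\<lambda>z. Y z $ i) (\<lambda>z. Y z $ j)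
        - (\<integral>x. covariance M2 (\<lambda>y. Y (x, y) $ i) (\<lambda>y. Y (x, y) $ j) \<partial>M1)"
      using total[of i j] by (simp add: has_bochner_integral_iff)
    also have "\<dots> = (cov_mat (M1 \<Otimes>\<^sub>M M2) Y - (\<integral>x. cov_mat M2 (\<lambda>y. Y (x, y)) \<partial>M1)) $ i $ j"
    proof -
      have "integrable M1 (\<lambda>x. cov_mat M2 (\<lambda>y. Y (x, y)))"
        using int_cov_nth by (simp add: integrable_vec_iff)
      from integral_vec_nth[OF this, of i] integral_vec_nth[OF int_cov_nth[of i], of j]
      show ?thesis by (simp add: cov_mat_nth)
    qed
    finally show ?thesis .
  qed
  then show ?thesis by (simp add: vec_eq_iff)
qed

lemma loewner_le_of_quadratic_form_bound:
  fixes D E :: "real^'k^'k"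
  assumes "\<And>v. \<bar>v \<bullet> (D *v v)\<bar> \<le> c * (v \<bullet> v)"
  shows "loewner_le (E - c *\<^sub>R mat 1) (E + D)" and "loewner_le (E + D) (E + c *\<^sub>R mat 1)"
proof -
  have "v \<bullet> ((E + D - (E - c *\<^sub>R mat 1)) *v v) = v \<bullet> (D *v v) + c * (v \<bullet> v)"
    and "v \<bullet> ((E + c *\<^sub>R mat 1 - (E + D)) *v v) = c * (v \<bullet> v) - v \<bullet> (D *v v)" for v
    by (simp_all add: matrix_vector_mult_add_rdistrib matrix_vector_mult_diff_rdistrib
        scaleR_matrix_vector_assoc[symmetric] inner_add_right inner_diff_right)
  moreover have "0 \<le> v \<bullet> (D *v v) + c * (v \<bullet> v)" "0 \<le> c * (v \<bullet> v) - v \<bullet> (D *v v)" for v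
    using assms[of v] by (simp_all add: abs_le_iff)
  ultimately show "loewner_le (E - c *\<^sub>R mat 1) (E + D)" "loewner_le (E + D) (E + c *\<^sub>R mat 1)"
    unfolding loewner_le_def by simp_all
qed

section \<open>Truncated squares\<close>

definition trunc_sq :: "real \<Rightarrow> real \<Rightarrow> real" where
  "trunc_sq R t = (min \<bar>t\<bar> R)\<^sup>2"

lemma borel_measurable_trunc_sq [measurable]: "trunc_sq R \<in> borel_measurable borel"
  unfolding trunc_sq_def[abs_def] by measurable

lemma trunc_sq_eq: "\<bar>t\<bar> \<le> R \<Longrightarrow> trunc_sq R t = t\<^sup>2"
  by (simp add: trunc_sq_def min_absorb1)

lemma trunc_sq_bounded: "0 \<le> R \<Longrightarrow> \<bar>trunc_sq R t\<bar> \<le> R\<^sup>2"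
  by (simp add: trunc_sq_def power_mono)

lemma trunc_sq_mono: "0 \<le> R \<Longrightarrow> R \<le> R' \<Longrightarrow> trunc_sq R t \<le> trunc_sq R' t"
  by (simp add: trunc_sq_def power_mono)

lemma trunc_sq_le_square: "0 \<le> R \<Longrightarrow> trunc_sq R t \<le> t\<^sup>2"
  using power_mono[of "min \<bar>t\<bar> R" "\<bar>t\<bar>" 2] by (simp add: trunc_sq_def)

lemma lipschitz_on_trunc_sq:
  assumes "0 \<le> R"
  shows "(2 * R)-lipschitz_on UNIV (trunc_sq R)"
proof (rule lipschitz_onI)
  fix s t :: real
  define a b where "a = min \<bar>s\<bar> R" and "b = min \<bar>t\<bar> R"
  have "\<bar>a - b\<bar> \<le> \<bar>s - t\<bar>"
    unfolding a_def b_def by (auto simp: min_def abs_if)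
  moreover have "0 \<le> a + b" "a + b \<le> 2 * R"
    using assms by (auto simp: a_def b_def)
  moreover have "trunc_sq R s - trunc_sq R t = (a - b) * (a + b)"
    by (simp add: trunc_sq_def a_def [symmetric] b_def [symmetric] power2_eq_square algebra_simps)
  ultimately have "dist (trunc_sq R s) (trunc_sq R t) = \<bar>a - b\<bar> * (a + b)"
    by (simp add: dist_real_def abs_mult)
  also have "\<dots> \<le> \<bar>s - t\<bar> * (2 * R)"
    using \<open>\<bar>a - b\<bar> \<le> \<bar>s - t\<bar>\<close> \<open>0 \<le> a + b\<close> \<open>a + b \<le> 2 * R\<close> by (intro mult_mono) auto
  finally show "dist (trunc_sq R s) (trunc_sq R t) \<le> 2 * R * dist s t"
    by (simp add: dist_real_def mult.commute)
qed (use assms in simp)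

lemma nn_integral_square_eq_SUP_trunc_sq:
  assumes [measurable]: "X \<in> borel_measurable M"
  shows "(\<integral>\<^sup>+\<omega>. ennreal ((X \<omega>)\<^sup>2) \<partial>M) = (SUP n. \<integral>\<^sup>+\<omega>. ennreal (trunc_sq (real n) (X \<omega>)) \<partial>M)"
proof -
  have SUP_trunc_sq: "(SUP n. ennreal (trunc_sq (real n) t)) = ennreal (t\<^sup>2)" for t
  proof (rule antisym)
    show "(SUP n. ennreal (trunc_sq (real n) t)) \<le> ennreal (t\<^sup>2)"
      by (rule SUP_least) (simp add: ennreal_leI trunc_sq_le_square)
    show "ennreal (t\<^sup>2) \<le> (SUP n. ennreal (trunc_sq (real n) t))"
      by (rule SUP_upper2[of "nat \<lceil>\<bar>t\<bar>\<rceil>"]) (simp_all add: trunc_sq_eq real_nat_ceiling_ge)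
  qed
  have "incseq (\<lambda>n \<omega>. ennreal (trunc_sq (real n) (X \<omega>)))"
    by (auto simp: incseq_def le_fun_def intro!: ennreal_leI trunc_sq_mono)
  then have "(SUP n. \<integral>\<^sup>+\<omega>. ennreal (trunc_sq (real n) (X \<omega>)) \<partial>M)
      = (\<integral>\<^sup>+\<omega>. (SUP n. ennreal (trunc_sq (real n) (X \<omega>))) \<partial>M)"
    by (rule nn_integral_monotone_convergence_SUP[symmetric]) (simp add: trunc_sq_def)
  then show ?thesis by (simp add: SUP_trunc_sq)
qed

section \<open>Orbit averages\<close>

locale orbit_averaging = pair_prob_space P Q
  for P :: "'x measure" and Q :: "'g::{zero,topological_space} measure"
    and act :: "'g \<Rightarrow> 'x \<Rightarrow> 'x" and f :: "'x \<Rightarrow> real^'k" +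
  assumes sets_Q: "sets Q = sets borel"
    and act_zero: "\<And>x. act 0 x = x"
    and measurable_orbit [measurable]: "(\<lambda>(x, g). f (act g x)) \<in> borel_measurable (P \<Otimes>\<^sub>M Q)"
    and square_integrable_orbit: "integrable (P \<Otimes>\<^sub>M Q) (\<lambda>(x, g). (norm (f (act g x)))\<^sup>2)"
begin

abbreviation expected_W1 :: ennreal where
  "expected_W1 \<equiv> \<integral>\<^sup>+g. wasserstein1 (distr P borel (\<lambda>x. f (act g x))) (distr P borel f) \<partial>Q"

lemma measurable_translate [measurable]: "(\<lambda>x. f (act g x)) \<in> borel_measurable P"
proof -
  have "g \<in> space Q"
    using sets_eq_imp_space_eq[OF sets_Q] by simp
  then have "(\<lambda>x. (x, g)) \<in> measurable P (P \<Otimes>\<^sub>M Q)"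
    by measurable
  from measurable_compose[OF this measurable_orbit] show ?thesis by simp
qed

lemma measurable_f [measurable]: "f \<in> borel_measurable P"
  using measurable_translate[of 0] by (simp add: act_zero)

lemma integrable_orbit: "integrable (P \<Otimes>\<^sub>M Q) (\<lambda>(x, g). f (act g x))"
proof -
  have "integrable (P \<Otimes>\<^sub>M Q) (\<lambda>z. norm ((\<lambda>(x, g). f (act g x)) z))"
    by (rule P.square_integrable_imp_integrable)
      (use square_integrable_orbit in \<open>simp_all add: case_prod_beta'\<close>)
  then show ?thesis by (simp add: integrable_norm_iff)
qed

lemma mean_shift_le_expected_W1:
  fixes h :: "real^'k \<Rightarrow> 'b::{banach,second_countable_topology}"
  assumes h: "1-lipschitz_on UNIV h"
  shows "ennreal (norm ((\<integral>(x, g). h (f (act g x)) \<partial>(P \<Otimes>\<^sub>M Q)) - (\<integral>x. h (f x) \<partial>P))) \<le> expected_W1"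
proof -
  have [measurable]: "h \<in> borel_measurable borel"
    by (rule lipschitz_on_borel_measurable[OF h])
  have int_h: "integrable (P \<Otimes>\<^sub>M Q) (\<lambda>(x, g). h (f (act g x)))"
    using integrable_lipschitz_comp[OF _ h integrable_orbit] by (simp add: case_prod_beta')
  define s where "s g = (\<integral>x. h (f (act g x)) \<partial>P) - (\<integral>x. h (f x) \<partial>P)" for g
  have "integrable Q s"
    unfolding s_def using integrable_snd[OF int_h] by simp
  moreover have "ennreal (norm (s g))
      \<le> wasserstein1 (distr P borel (\<lambda>x. f (act g x))) (distr P borel f)" for g
    using integral_dist_le_wasserstein1[OF h,
        of "distr P borel (\<lambda>x. f (act g x))" "distr P borel f"]
    by (simp add: s_def integral_distr dist_norm)
  ultimately have "ennreal (norm (\<integral>g. s g \<partial>Q)) \<le> expected_W1"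
    by (rule norm_integral_le_nn_integral)
  moreover have "(\<integral>g. s g \<partial>Q) = (\<integral>(x, g). h (f (act g x)) \<partial>(P \<Otimes>\<^sub>M Q)) - (\<integral>x. h (f x) \<partial>P)"
    unfolding s_def using integrable_snd[OF int_h] integral_snd[OF int_h]
    by (simp add: M2.prob_space)
  ultimately show ?thesis by simp
qed

lemma mean_shift_le_lipschitz:
  fixes h :: "real^'k \<Rightarrow> 'b::{banach,second_countable_topology}"
  assumes h: "L-lipschitz_on UNIV h"
  shows "ennreal (norm ((\<integral>(x, g). h (f (act g x)) \<partial>(P \<Otimes>\<^sub>M Q)) - (\<integral>x. h (f x) \<partial>P)))
    \<le> ennreal L * expected_W1"
proof (cases "L = 0")
  case True
  define c where "c = h 0"
  have "h y = c" for y
    using lipschitz_onD[OF h, of y 0] True by (simp add: c_def)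
  then show ?thesis
    by (simp add: case_prod_beta' P.prob_space M1.prob_space)
next
  case False
  then have "0 < L" using lipschitz_on_nonneg[OF h] by simp
  have "1-lipschitz_on UNIV (\<lambda>y. inverse L *\<^sub>R h y)"
    using lipschitz_on_cmult_nonneg[OF h, of "inverse L"] \<open>0 < L\<close> by simp
  from mean_shift_le_expected_W1[OF this]
  have "ennreal (inverse L * norm ((\<integral>(x, g). h (f (act g x)) \<partial>(P \<Otimes>\<^sub>M Q)) - (\<integral>x. h (f x) \<partial>P)))
      \<le> expected_W1"
    using \<open>0 < L\<close> by (simp add: case_prod_beta' scaleR_diff_right[symmetric])
  then have "ennreal L * ennreal (inverse L
      * norm ((\<integral>(x, g). h (f (act g x)) \<partial>(P \<Otimes>\<^sub>M Q)) - (\<integral>x. h (f x) \<partial>P)))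
      \<le> ennreal L * expected_W1"
    by (rule mult_left_mono) simp
  with \<open>0 < L\<close> show ?thesis
    by (simp add: ennreal_mult[symmetric] mult.assoc[symmetric])
qed

lemma mean_orbit_avg_shift:
  "ennreal (norm ((\<integral>x. orbit_avg Q act f x \<partial>P) - (\<integral>x. f x \<partial>P))) \<le> expected_W1"
  using mean_shift_le_expected_W1[OF lipschitz_on_id] integral_fst[OF integrable_orbit]
  by (simp add: orbit_avg_def)

lemma mean_orbit_avg_comp_shift:
  fixes \<phi> :: "real^'k \<Rightarrow> 'b::{banach,second_countable_topology}"
  assumes "lip_const \<phi> \<noteq> \<infinity>"
  shows "ennreal (norm ((\<integral>x. orbit_avg Q act (\<lambda>y. \<phi> (f y)) x \<partial>P) - (\<integral>x. \<phi> (f x) \<partial>P)))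
    \<le> lip_const \<phi> * expected_W1"
proof -
  note \<phi> = lipschitz_on_lip_const[OF assms]
  have "integrable (P \<Otimes>\<^sub>M Q) (\<lambda>(x, g). \<phi> (f (act g x)))"
    using integrable_lipschitz_comp[OF _ \<phi> integrable_orbit] by (simp add: case_prod_beta')
  from integral_fst[OF this] mean_shift_le_lipschitz[OF \<phi>] assms show ?thesis
    by (simp add: orbit_avg_def ennreal_enn2real_if)
qed

lemma cov_mat_orbit_avg:
  "cov_mat P (orbit_avg Q act f)
    = cov_mat (P \<Otimes>\<^sub>M Q) (\<lambda>(x, g). f (act g x)) - (\<integral>x. cov_mat Q (\<lambda>g. f (act g x)) \<partial>P)"
  using law_of_total_cov_mat[OF measurable_orbit] square_integrable_orbit
  by (simp add: orbit_avg_def[abs_def] case_prod_beta')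

lemma linear_mean_shift:
  "ennreal \<bar>(\<integral>(x, g). v \<bullet> f (act g x) \<partial>(P \<Otimes>\<^sub>M Q)) - (\<integral>x. v \<bullet> f x \<partial>P)\<bar>
    \<le> ennreal (norm v) * expected_W1"
  using mean_shift_le_lipschitz[OF lipschitz_on_inner] by simp

lemma trunc_sq_mean_shift:
  assumes "0 \<le> R"
  shows "ennreal \<bar>(\<integral>(x, g). trunc_sq R (v \<bullet> f (act g x)) \<partial>(P \<Otimes>\<^sub>M Q))
      - (\<integral>x. trunc_sq R (v \<bullet> f x) \<partial>P)\<bar>
    \<le> ennreal (2 * R * norm v) * expected_W1"
  using mean_shift_le_lipschitz[OF lipschitz_on_compose2[OF lipschitz_on_inner
      lipschitz_on_subset[OF lipschitz_on_trunc_sq[OF assms]]]]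
  by simp

lemma square_integrable_orbit_inner: "integrable (P \<Otimes>\<^sub>M Q) (\<lambda>(x, g). (v \<bullet> f (act g x))\<^sup>2)"
proof (rule Bochner_Integration.integrable_bound)
  show "integrable (P \<Otimes>\<^sub>M Q) (\<lambda>(x, g). (norm v)\<^sup>2 * (norm (f (act g x)))\<^sup>2)"
    using integrable_mult_right[OF square_integrable_orbit, of "(norm v)\<^sup>2"]
    by (simp add: case_prod_beta')
  have "(v \<bullet> y)\<^sup>2 \<le> (norm v)\<^sup>2 * (norm y)\<^sup>2" for y :: "real^'k"
    using power_mono[OF Cauchy_Schwarz_ineq2[of v y], of 2] by (simp add: power_mult_distrib)
  then show "AE z in P \<Otimes>\<^sub>M Q. norm ((\<lambda>(x, g). (v \<bullet> f (act g x))\<^sup>2) z)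
      \<le> norm ((\<lambda>(x, g). (norm v)\<^sup>2 * (norm (f (act g x)))\<^sup>2) z)"
    by (intro AE_I2) (simp add: case_prod_beta')
qed measurable

lemma variance_shift_bounded:
  assumes "sup_norm f \<noteq> \<infinity>"
  shows "ennreal \<bar>covariance (P \<Otimes>\<^sub>M Q) (\<lambda>(x, g). v \<bullet> f (act g x)) (\<lambda>(x, g). v \<bullet> f (act g x))
      - covariance P (\<lambda>x. v \<bullet> f x) (\<lambda>x. v \<bullet> f x)\<bar>
    \<le> ennreal (4 * enn2real (sup_norm f) * (norm v)\<^sup>2) * expected_W1"
proof -
  define R where "R = enn2real (sup_norm f) * norm v"
  have "0 \<le> R" by (simp add: R_def)
  have bound: "\<bar>v \<bullet> f y\<bar> \<le> R" for y
  proof -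
    have "\<bar>v \<bullet> f y\<bar> \<le> norm v * norm (f y)" by (rule Cauchy_Schwarz_ineq2)
    also have "\<dots> \<le> norm v * enn2real (sup_norm f)"
      by (rule mult_left_mono[OF norm_le_sup_norm[OF assms]]) simp
    finally show ?thesis by (simp add: R_def mult.commute)
  qed
  define a where "a = (\<integral>(x, g). v \<bullet> f (act g x) \<partial>(P \<Otimes>\<^sub>M Q))"
  define b where "b = (\<integral>x. v \<bullet> f x \<partial>P)"
  define s where "s = (\<integral>(x, g). (v \<bullet> f (act g x))\<^sup>2 \<partial>(P \<Otimes>\<^sub>M Q))"
  define t where "t = (\<integral>x. (v \<bullet> f x)\<^sup>2 \<partial>P)"
  have int_PQ: "integrable (P \<Otimes>\<^sub>M Q) (\<lambda>(x, g). v \<bullet> f (act g x))"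
    using integrable_inner_right[OF integrable_orbit, of v] by (simp add: case_prod_beta')
  have square_bound: "(v \<bullet> f y)\<^sup>2 \<le> R\<^sup>2" for y
    using power_mono[OF bound abs_ge_zero, of y 2] by simp
  have int_P: "integrable P (\<lambda>x. v \<bullet> f x)" "integrable P (\<lambda>x. (v \<bullet> f x)\<^sup>2)"
    by (rule M1.integrable_const_bound[where B=R], use bound in simp, measurable)
      (rule M1.integrable_const_bound[where B="R\<^sup>2"], use square_bound in simp, measurable)
  have "covariance (P \<Otimes>\<^sub>M Q) (\<lambda>(x, g). v \<bullet> f (act g x)) (\<lambda>(x, g). v \<bullet> f (act g x)) = s - a\<^sup>2"
    using int_PQ square_integrable_orbit_inner[of v]
    by (simp add: P.covariance_eq a_def s_def power2_eq_square case_prod_beta')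
  moreover have "covariance P (\<lambda>x. v \<bullet> f x) (\<lambda>x. v \<bullet> f x) = t - b\<^sup>2"
    using int_P by (simp add: M1.covariance_eq b_def t_def power2_eq_square)
  moreover have "\<bar>a\<bar> \<le> R"
    unfolding a_def by (rule P.abs_expectation_le) (use bound in \<open>auto simp: case_prod_beta'\<close>)
  moreover have "\<bar>b\<bar> \<le> R"
    unfolding b_def by (rule M1.abs_expectation_le) (use bound in auto)
  ultimately have "ennreal \<bar>covariance (P \<Otimes>\<^sub>M Q) (\<lambda>(x, g). v \<bullet> f (act g x)) (\<lambda>(x, g). v \<bullet> f (act g x))
      - covariance P (\<lambda>x. v \<bullet> f x) (\<lambda>x. v \<bullet> f x)\<bar>
      \<le> ennreal \<bar>s - t\<bar> + ennreal (2 * R) * ennreal \<bar>a - b\<bar>"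
    using abs_diff_variances_le[of a R b s t] \<open>0 \<le> R\<close>
    by (simp add: ennreal_mult[symmetric] ennreal_plus[symmetric] del: ennreal_plus)
  also have "\<dots> \<le> ennreal (2 * R * norm v) * expected_W1
      + ennreal (2 * R) * (ennreal (norm v) * expected_W1)"
  proof (intro add_mono mult_left_mono)
    show "ennreal \<bar>s - t\<bar> \<le> ennreal (2 * R * norm v) * expected_W1"
      using trunc_sq_mean_shift[OF \<open>0 \<le> R\<close>, of v] by (simp add: s_def t_def trunc_sq_eq[OF bound])
    show "ennreal \<bar>a - b\<bar> \<le> ennreal (norm v) * expected_W1"
      using linear_mean_shift[of v] by (simp add: a_def b_def)
  qed simp
  also have "\<dots> = ennreal (4 * enn2real (sup_norm f) * (norm v)\<^sup>2) * expected_W1"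
    using \<open>0 \<le> R\<close>
    by (simp add: R_def ennreal_mult[symmetric] mult.assoc[symmetric] distrib_right[symmetric]
        ennreal_plus[symmetric] power2_eq_square del: ennreal_plus)
  finally show ?thesis .
qed

lemma second_moment_eq_if_expected_W1_zero:
  assumes "expected_W1 = 0"
  shows "integrable P (\<lambda>x. (v \<bullet> f x)\<^sup>2)"
    and "(\<integral>x. (v \<bullet> f x)\<^sup>2 \<partial>P) = (\<integral>(x, g). (v \<bullet> f (act g x))\<^sup>2 \<partial>(P \<Otimes>\<^sub>M Q))"
proof -
  have int_trunc: "integrable P (\<lambda>x. trunc_sq (real n) (v \<bullet> f x))"
    "integrable (P \<Otimes>\<^sub>M Q) (\<lambda>(x, g). trunc_sq (real n) (v \<bullet> f (act g x)))" for n
    by (rule M1.integrable_const_bound[where B="(real n)\<^sup>2"], simp add: trunc_sq_bounded, measurable)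
      (rule P.integrable_const_bound[where B="(real n)\<^sup>2"],
        simp add: trunc_sq_bounded case_prod_beta', measurable)
  have "(\<integral>\<^sup>+x. ennreal (trunc_sq (real n) (v \<bullet> f x)) \<partial>P)
      = (\<integral>\<^sup>+z. ennreal ((\<lambda>(x, g). trunc_sq (real n) (v \<bullet> f (act g x))) z) \<partial>(P \<Otimes>\<^sub>M Q))" for n
    using trunc_sq_mean_shift[of "real n" v] assms int_trunc[of n]
    by (simp add: nn_integral_eq_integral trunc_sq_def case_prod_beta')
  then have "(\<integral>\<^sup>+x. ennreal ((v \<bullet> f x)\<^sup>2) \<partial>P)
      = (\<integral>\<^sup>+z. ennreal ((\<lambda>(x, g). (v \<bullet> f (act g x))\<^sup>2) z) \<partial>(P \<Otimes>\<^sub>M Q))"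
    by (simp add: nn_integral_square_eq_SUP_trunc_sq case_prod_beta')
  also have "\<dots> = ennreal (\<integral>(x, g). (v \<bullet> f (act g x))\<^sup>2 \<partial>(P \<Otimes>\<^sub>M Q))"
    using square_integrable_orbit_inner[of v] by (simp add: nn_integral_eq_integral case_prod_beta')
  finally have moment: "(\<integral>\<^sup>+x. ennreal ((v \<bullet> f x)\<^sup>2) \<partial>P)
      = ennreal (\<integral>(x, g). (v \<bullet> f (act g x))\<^sup>2 \<partial>(P \<Otimes>\<^sub>M Q))" .
  then show int: "integrable P (\<lambda>x. (v \<bullet> f x)\<^sup>2)"
    by (intro integrableI_nonneg) auto
  with moment have "ennreal (\<integral>x. (v \<bullet> f x)\<^sup>2 \<partial>P)
      = ennreal (\<integral>(x, g). (v \<bullet> f (act g x))\<^sup>2 \<partial>(P \<Otimes>\<^sub>M Q))"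
    by (simp add: nn_integral_eq_integral)
  then show "(\<integral>x. (v \<bullet> f x)\<^sup>2 \<partial>P) = (\<integral>(x, g). (v \<bullet> f (act g x))\<^sup>2 \<partial>(P \<Otimes>\<^sub>M Q))"
    by (subst (asm) ennreal_inj) (auto intro!: integral_nonneg_AE)
qed

lemma variance_eq_if_expected_W1_zero:
  assumes "expected_W1 = 0"
  shows "covariance (P \<Otimes>\<^sub>M Q) (\<lambda>(x, g). v \<bullet> f (act g x)) (\<lambda>(x, g). v \<bullet> f (act g x))
    = covariance P (\<lambda>x. v \<bullet> f x) (\<lambda>x. v \<bullet> f x)"
proof -
  note second_moment = second_moment_eq_if_expected_W1_zero[OF assms, of v]
  have int_P: "integrable P (\<lambda>x. v \<bullet> f x)"
    by (rule M1.square_integrable_imp_integrable[OF _ second_moment(1)]) measurable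
  have int_PQ: "integrable (P \<Otimes>\<^sub>M Q) (\<lambda>(x, g). v \<bullet> f (act g x))"
    using integrable_inner_right[OF integrable_orbit, of v] by (simp add: case_prod_beta')
  have "covariance (P \<Otimes>\<^sub>M Q) (\<lambda>(x, g). v \<bullet> f (act g x)) (\<lambda>(x, g). v \<bullet> f (act g x))
      = (\<integral>(x, g). (v \<bullet> f (act g x))\<^sup>2 \<partial>(P \<Otimes>\<^sub>M Q))
        - (\<integral>(x, g). v \<bullet> f (act g x) \<partial>(P \<Otimes>\<^sub>M Q))\<^sup>2"
    using P.covariance_self_eq[OF int_PQ] square_integrable_orbit_inner[of v]
    by (simp add: case_prod_beta')
  also have "\<dots> = (\<integral>x. (v \<bullet> f x)\<^sup>2 \<partial>P) - (\<integral>x. v \<bullet> f x \<partial>P)\<^sup>2"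
    using second_moment(2) linear_mean_shift[of v] assms by (simp del: integral_inner_right)
  also have "\<dots> = covariance P (\<lambda>x. v \<bullet> f x) (\<lambda>x. v \<bullet> f x)"
    using M1.covariance_self_eq[OF int_P second_moment(1)] by simp
  finally show ?thesis .
qed

lemma quadratic_form_cov_shift:
  assumes fin: "4 * sup_norm f * expected_W1 \<noteq> \<infinity>"
  shows "\<bar>v \<bullet> ((cov_mat (P \<Otimes>\<^sub>M Q) (\<lambda>(x, g). f (act g x)) - cov_mat P f) *v v)\<bar>
    \<le> enn2real (4 * sup_norm f * expected_W1) * (v \<bullet> v)"
proof -
  have PQ_form: "v \<bullet> (cov_mat (P \<Otimes>\<^sub>M Q) (\<lambda>(x, g). f (act g x)) *v v)
      = covariance (P \<Otimes>\<^sub>M Q) (\<lambda>(x, g). v \<bullet> f (act g x)) (\<lambda>(x, g). v \<bullet> f (act g x))"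
    using P.inner_cov_mat[OF measurable_orbit square_integrable_vec_nth[OF measurable_orbit]]
      square_integrable_orbit by (simp add: case_prod_beta')
  have P_form: "v \<bullet> (cov_mat P f *v v) = covariance P (\<lambda>x. v \<bullet> f x) (\<lambda>x. v \<bullet> f x)"
    if "\<And>i. integrable P (\<lambda>x. (f x $ i)\<^sup>2)"
    using M1.inner_cov_mat[OF measurable_f that] .
  have diff: "v \<bullet> ((A - B) *v v) = v \<bullet> (A *v v) - v \<bullet> (B *v v)" for A B :: "real^'k^'k"
    by (simp add: matrix_vector_mult_diff_rdistrib inner_diff_right)
  show ?thesis
  proof (cases "sup_norm f = \<infinity>")
    case True
    with fin have "expected_W1 = 0"
      by (auto simp: ennreal_mult_top ennreal_top_mult split: if_splits)
    have sq_P: "integrable P (\<lambda>x. (f x $ i)\<^sup>2)" for i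
      using second_moment_eq_if_expected_W1_zero(1)[OF \<open>expected_W1 = 0\<close>, of "axis i 1"]
      by (simp add: inner_axis')
    show ?thesis
      using variance_eq_if_expected_W1_zero[OF \<open>expected_W1 = 0\<close>, of v]
      by (simp add: diff PQ_form P_form[OF sq_P])
  next
    case False
    define M where "M = enn2real (sup_norm f)"
    have "(f x $ i)\<^sup>2 \<le> M\<^sup>2" for x i
    proof -
      have "\<bar>f x $ i\<bar> \<le> M"
        using component_le_norm_cart[of "f x" i] norm_le_sup_norm[OF False, of x]
        by (simp add: M_def)
      then show ?thesis
        using power_mono[of "\<bar>f x $ i\<bar>" M 2] by simp
    qed
    then have sq_P: "integrable P (\<lambda>x. (f x $ i)\<^sup>2)" for i
      by (intro M1.integrable_const_bound[where B="M\<^sup>2"]) (auto, measurable)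
    have "ennreal \<bar>v \<bullet> ((cov_mat (P \<Otimes>\<^sub>M Q) (\<lambda>(x, g). f (act g x)) - cov_mat P f) *v v)\<bar>
        \<le> ennreal (4 * M * (norm v)\<^sup>2) * expected_W1"
      unfolding diff PQ_form P_form[OF sq_P] using variance_shift_bounded[OF False, of v]
      by (simp add: M_def)
    also have "\<dots> = ennreal (v \<bullet> v) * (ennreal (4 * M) * expected_W1)"
      by (simp add: ennreal_mult M_def power2_norm_eq_inner mult_ac)
    also have "ennreal (4 * M) * expected_W1 = 4 * sup_norm f * expected_W1"
      using False by (simp add: M_def ennreal_mult top.not_eq_extremum)
    also have "ennreal (v \<bullet> v) * (4 * sup_norm f * expected_W1)
        = ennreal (v \<bullet> v * enn2real (4 * sup_norm f * expected_W1))"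
      using fin by (simp add: ennreal_mult top.not_eq_extremum)
    finally show ?thesis
      by (simp add: mult.commute)
  qed
qed

end

theorem lemma6p2:
  fixes P :: "'x measure" and Q :: "'g::topological_group_add measure"
    and act :: "'g \<Rightarrow> 'x \<Rightarrow> 'x" and f :: "'x \<Rightarrow> real^'k"
  assumes P: "prob_space P"
    and compact_G: "compact (UNIV :: 'g set)"
    and Haar: "haar_prob Q"
    and act_id: "\<And>x. act 0 x = x"
    and act_comp: "\<And>g h x. act (g + h) x = act g (act h x)"
    and f_meas: "(\<lambda>(x, g). f (act g x)) \<in> borel_measurable (P \<Otimes>\<^sub>M Q)"
    and f_L2: "integrable (P \<Otimes>\<^sub>M Q) (\<lambda>(x, g). (norm (f (act g x)))\<^sup>2)"
  defines "EW \<equiv> \<integral>\<^sup>+ g. wasserstein1 (distr P borel (\<lambda>x. f (act g x))) (distr P borel f) \<partial>Q"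
  shows
    "ennreal (norm ((\<integral>x. orbit_avg Q act f x \<partial>P) - (\<integral>x. f x \<partial>P))) \<le> EW
     \<and> cov_mat P (orbit_avg Q act f) =
       cov_mat (P \<Otimes>\<^sub>M Q) (\<lambda>(x, g). f (act g x)) - (\<integral>x. cov_mat Q (\<lambda>g. f (act g x)) \<partial>P)
     \<and> (4 * sup_norm f * EW \<noteq> \<infinity> \<longrightarrow>
       loewner_le (- (\<integral>x. cov_mat Q (\<lambda>g. f (act g x)) \<partial>P) - enn2real (4 * sup_norm f * EW) *\<^sub>R mat 1)
                  (cov_mat P (orbit_avg Q act f) - cov_mat P f) \<and>
       loewner_le (cov_mat P (orbit_avg Q act f) - cov_mat P f)
                  (- (\<integral>x. cov_mat Q (\<lambda>g. f (act g x)) \<partial>P) + enn2real (4 * sup_norm f * EW) *\<^sub>R mat 1))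
     \<and> (\<forall>\<phi> :: real^'k \<Rightarrow> real. convex_on UNIV \<phi> \<longrightarrow> lip_const \<phi> \<noteq> \<infinity> \<longrightarrow>
       ennreal \<bar>(\<integral>x. \<phi> (orbit_avg Q act f x) \<partial>P) - (\<integral>x. \<phi> (f x) \<partial>P)
               - ((\<integral>x. \<phi> (orbit_avg Q act f x) \<partial>P) - (\<integral>x. orbit_avg Q act (\<lambda>y. \<phi> (f y)) x \<partial>P))\<bar>
       \<le> lip_const \<phi> * EW)"
proof -
  interpret orbit_averaging P Q act f
    using P Haar act_id f_meas f_L2
    unfolding orbit_averaging_def orbit_averaging_axioms_def haar_prob_def pair_prob_space_def
      pair_sigma_finite_def
    by (auto intro: prob_space_imp_sigma_finite)
  let ?E = "\<integral>x. cov_mat Q (\<lambda>g. f (act g x)) \<partial>P"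
  have cov_shift: "cov_mat P (orbit_avg Q act f) - cov_mat P f
      = - ?E + (cov_mat (P \<Otimes>\<^sub>M Q) (\<lambda>(x, g). f (act g x)) - cov_mat P f)"
    by (simp add: cov_mat_orbit_avg)
  have comp_shift: "\<bar>(\<integral>x. \<phi> (orbit_avg Q act f x) \<partial>P) - (\<integral>x. \<phi> (f x) \<partial>P)
      - ((\<integral>x. \<phi> (orbit_avg Q act f x) \<partial>P) - (\<integral>x. orbit_avg Q act (\<lambda>y. \<phi> (f y)) x \<partial>P))\<bar>
      = norm ((\<integral>x. orbit_avg Q act (\<lambda>y. \<phi> (f y)) x \<partial>P) - (\<integral>x. \<phi> (f x) \<partial>P))"
    for \<phi> :: "real^'k \<Rightarrow> real"
    by simp
  note loewner = loewner_le_of_quadratic_form_bound[OF quadratic_form_cov_shift, where E = "- ?E"]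
  show ?thesis
    unfolding EW_def cov_shift comp_shift
    using mean_orbit_avg_shift cov_mat_orbit_avg mean_orbit_avg_comp_shift[where 'b = real] loewner
    by (simp del: real_norm_def)
qed

end
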